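(* Let $(h_t^\psi,h_t^{\widetilde\psi})$ be two solutions of the conditioned Langevin dynamics (described in the context) on $D$ with boundary data $\psi,\widetilde\psi$ respectively and the same conditioning $a,b$, driven by the same Brownian motions, and let $\overline h=h^\psi-h^{\widetilde\psi}$. There exists $C>0$ depending only on $\mathcal V$ such that for every $T>S$, $\sum_{x\in D}|\overline h_T(x)|^2+\int_S^T\sum_{b\in D^*}|\nabla\overline h_t(b)|^2dt\le C\Big(\sum_{x\in D}|\overline h_S(x)|^2+\int_S^T\sum_{b\in\partial D^*}|\overline\psi(x_b)||\nabla\overline h_t(b)|dt\Big)$.
   Context: $\mathcal{V}\in C^2(\mathbf{R})$ with $\mathcal{V}(x)=\mathcal{V}(-x)$, $0<a_{\mathcal V}\le\mathcal V''\le A_{\mathcal V}<\infty$, $\mathcal V''$ Lipschitz. $D\subseteq\mathbf Z^2$ is bounded, $\partial D$ the set of vertices outside $D$ adjacent to $D$, $D^*$ the edges with at least one endpoint in $D$, $\partial D^*$ the edges joining $D$ to $\partial D$, and for $b\in\partial D^*$, $x_b$ is its endpoint in $\partial D$; $\nabla f(b)=f(y)-f(x)$ for $b=(x,y)$; gradients of $\overline h$ on boundary edges use the extension by $\overline\psi=\psi-\widetilde\psi$ on $\partial D$. $a,b:D\to[-\infty,\infty]$ with $a\le b$. The conditioned Langevin dynamics with boundary data $\psi$ is the solution of $dh_t(x)=\sum_{b\ni x}\mathcal V'(\nabla(h_t\vee\psi)(b))dt+d[\ell_t^a-\ell_t^b](x)+\sqrt2dW_t(x)$, $x\in D$, $t\in\mathbf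 R$, where the edges $b\ni x$ are oriented with initial point $x$, $h\vee\psi$ is $h$ on $D$ and $\psi$ on $\partial D$, $W$ is a family of independent standard two-sided Brownian motions, and $\ell^a(x),\ell^b(x)$ are non-decreasing bounded-variation processes which increase only when $h_t(x)=a(x)$, resp. $h_t(x)=b(x)$ ($\ell^a\equiv0$ if $a(x)=-\infty$, $\ell^b\equiv0$ if $b(x)=\infty$), keeping $a\le h_t\le b$. *)

theory Defs
  imports "HOL-Analysis.Analysis" "HOL-Library.Extended_Real"
begin

type_synonym site = "int \<times> int"

definition adj :: "site \<Rightarrow> site \<Rightarrow> bool" where
  "adj x y \<longleftrightarrow> \<bar>fst x - fst y\<bar> + \<bar>snd x - snd y\<bar> = 1"

definition bdry :: "site set \<Rightarrow> site set" where
  "bdry D = {y. y \<notin> D \<and> (\<exists>x\<in>D. adj x y)}"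

text \<open>Unoriented nearest-neighbour edges of Z^2, each represented exactly once
  as the pair (x, x + e) with e a positive unit vector.\<close>
definition lattice_edges :: "(site \<times> site) set" where
  "lattice_edges = {(x, y). y = (fst x + 1, snd x) \<or> y = (fst x, snd x + 1)}"

definition Dstar :: "site set \<Rightarrow> (site \<times> site) set" where
  "Dstar D = {(x, y) \<in> lattice_edges. x \<in> D \<or> y \<in> D}"

definition bdry_edges :: "site set \<Rightarrow> (site \<times> site) set" where
  "bdry_edges D = {(x, y) \<in> lattice_edges.
      (x \<in> D \<and> y \<in> bdry D) \<or> (y \<in> D \<and> x \<in> bdry D)}"

definition bdry_pt :: "site set \<Rightarrow> site \<times> site \<Rightarrow> site" where
  "bdry_pt D e = (if fst e \<in> D then snd e else fst e)"

definition grad :: "(site \<Rightarrow> real) \<Rightarrow> site \<times> site \<Rightarrow> real" where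
  "grad f e = f (snd e) - f (fst e)"

definition ext :: "site set \<Rightarrow> (site \<Rightarrow> real) \<Rightarrow> (site \<Rightarrow> real) \<Rightarrow> site \<Rightarrow> real" where
  "ext D h \<psi> x = (if x \<in> D then h x else \<psi> x)"

definition drift :: "(real \<Rightarrow> real) \<Rightarrow> site set \<Rightarrow> (site \<Rightarrow> real) \<Rightarrow> (site \<Rightarrow> real) \<Rightarrow> site \<Rightarrow> real" where
  "drift V' D \<psi> h x = (\<Sum>y\<in>{y. adj x y}. V' (ext D h \<psi> y - ext D h \<psi> x))"

text \<open>Pathwise notion of solution of the conditioned Langevin dynamics on D with
  boundary data psi, conditioning a \<le> b, driven by the path W (noise is additive,
  so the SDE is understood pathwise in integrated form, for all times s \<le> t in R).
  la, lb are the processes l^a, l^b.\<close>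
definition langevin_sol ::
  "(real \<Rightarrow> real) \<Rightarrow> site set \<Rightarrow> (site \<Rightarrow> real) \<Rightarrow> (site \<Rightarrow> ereal) \<Rightarrow> (site \<Rightarrow> ereal)
   \<Rightarrow> (real \<Rightarrow> site \<Rightarrow> real) \<Rightarrow> (real \<Rightarrow> site \<Rightarrow> real)
   \<Rightarrow> (real \<Rightarrow> site \<Rightarrow> real) \<Rightarrow> (real \<Rightarrow> site \<Rightarrow> real) \<Rightarrow> bool" where
  "langevin_sol V' D \<psi> a b W h la lb \<longleftrightarrow>
     (\<forall>x\<in>D. continuous_on UNIV (\<lambda>t. h t x)) \<and>
     (\<forall>x\<in>D. \<forall>t. a x \<le> ereal (h t x) \<and> ereal (h t x) \<le> b x) \<and>
     (\<forall>x\<in>D. mono (\<lambda>t. la t x) \<and> mono (\<lambda>t. lb t x)) \<and>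
     (\<forall>x\<in>D. a x = -\<infinity> \<longrightarrow> (\<forall>t. la t x = 0)) \<and>
     (\<forall>x\<in>D. b x = \<infinity> \<longrightarrow> (\<forall>t. lb t x = 0)) \<and>
     (\<forall>x\<in>D. \<forall>s t. s \<le> t \<and> (\<forall>u\<in>{s..t}. ereal (h u x) \<noteq> a x) \<longrightarrow> la s x = la t x) \<and>
     (\<forall>x\<in>D. \<forall>s t. s \<le> t \<and> (\<forall>u\<in>{s..t}. ereal (h u x) \<noteq> b x) \<longrightarrow> lb s x = lb t x) \<and>
     (\<forall>x\<in>D. \<forall>s t. s \<le> t \<longrightarrow>
        h t x - h s x = integral {s..t} (\<lambda>u. drift V' D \<psi> (h u) x)
                        + (la t x - la s x) - (lb t x - lb s x)
                        + sqrt 2 * (W t x - W s x))"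

end

theory Submission
  imports Defs
begin

text \<open>Subtracting the equations of the two solutions, the noise cancels and at each site the
  difference \<open>g = h\<^sup>\<psi>(x) - h\<^sup>\<psi>\<^sup>'(x)\<close> satisfies \<open>dg = f dt + dL\<close>, where \<open>f\<close> is the difference of
  the drifts and the reflection term \<open>L\<close> cannot increase while \<open>g > 0\<close> nor decrease while
  \<open>g < 0\<close>. This gives \<open>g(T)\<^sup>2 - g(S)\<^sup>2 \<le> 2 \<integral>\<^sub>S\<^sup>T g f\<close> pathwise, without differentiating \<open>L\<close>:
  the upper right Dini derivative of \<open>g\<^sup>2 - 2 \<integral> g f\<close> is nonpositive, the only delicate times
  being the zeros of \<open>g\<close>, where \<open>|g|\<close> grows at most linearly. Summing over \<open>D\<close> and summing by
  parts, \<open>a\<^sub>V \<le> V'' \<le> A\<^sub>V\<close> bounds \<open>\<Sum>\<^sub>x g f\<close> by \<open>-a\<^sub>V\<close> times the Dirichlet energy of the difference over \<open>D\<^sup>*\<close>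
  plus \<open>A\<^sub>V\<close> times the boundary terms, and the gradient term is absorbed into the left.\<close>

section \<open>Continuous induction\<close>

lemma dini_upper_right_nonpos_imp_le:
  fixes \<phi> :: "real \<Rightarrow> real"
  assumes "S \<le> T" and cont: "continuous_on {S..T} \<phi>"
    and dini: "\<And>t0 \<epsilon>. t0 \<in> {S..<T} \<Longrightarrow> \<epsilon> > 0 \<Longrightarrow>
      \<forall>\<^sub>F t in at_right t0. \<phi> t \<le> \<phi> t0 + \<epsilon> * (t - t0)"
  shows "\<phi> T \<le> \<phi> S"
proof -
  have slope: "\<phi> T \<le> \<phi> S + \<epsilon> * (T - S)" if "\<epsilon> > 0" for \<epsilon>
  proof -
    define A where "A = {S..T} \<inter> (\<lambda>t. \<phi> t - \<epsilon> * (t - S)) -` {..\<phi> S}"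
    have "closed A"
      unfolding A_def
      by (intro continuous_closed_preimage continuous_intros cont closed_atMost
          closed_atLeastAtMost)
    moreover have "S \<in> A" and "bdd_above A"
      using \<open>S \<le> T\<close> unfolding A_def by (auto intro: bdd_aboveI[of _ T])
    ultimately have "Sup A \<in> A"
      using closed_contains_Sup by blast
    define m where "m = Sup A"
    have m: "m \<in> A" "\<And>t. t \<in> A \<Longrightarrow> t \<le> m"
      using \<open>Sup A \<in> A\<close> \<open>bdd_above A\<close> by (auto simp: m_def cSup_upper)
    have "m = T"
    proof (rule ccontr)
      assume "m \<noteq> T"
      with m(1) have "m \<in> {S..<T}" unfolding A_def by auto
      then obtain b where "b > m" and b: "\<And>t. m < t \<Longrightarrow> t < b \<Longrightarrow> \<phi> t \<le> \<phi> m + \<epsilon> * (t - m)"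
        using dini[of m \<epsilon>] \<open>\<epsilon> > 0\<close> unfolding eventually_at_right_field by blast
      define t where "t = min T ((m + b) / 2)"
      have t: "m < t" "t < b" "t \<le> T"
        using \<open>b > m\<close> \<open>m \<in> {S..<T}\<close> by (auto simp: t_def min_def)
      have "\<phi> t \<le> \<phi> S + \<epsilon> * (t - S)"
        using b[OF t(1,2)] m(1) unfolding A_def by (simp add: algebra_simps)
      then have "t \<in> A"
        using t \<open>m \<in> {S..<T}\<close> unfolding A_def by auto
      then show False
        using m(2) t(1) by fastforce
    qed
    then show ?thesis
      using m(1) unfolding A_def by auto
  qed
  show ?thesis
  proof (rule field_le_epsilon)
    fix e :: real
    assume "0 < e"
    have "\<phi> T \<le> \<phi> S + e / (T - S + 1) * (T - S)"
      using slope[of "e / (T - S + 1)"] \<open>0 < e\<close> \<open>S \<le> T\<close> by auto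
    also have "e / (T - S + 1) * (T - S) \<le> e"
      using \<open>0 < e\<close> \<open>S \<le> T\<close> by (simp add: field_simps)
    finally show "\<phi> T \<le> \<phi> S + e" by simp
  qed
qed

lemma eventually_at_right_close_on_interval:
  fixes f :: "real \<Rightarrow> real"
  assumes "continuous_on UNIV f" and "e > 0"
  shows "\<forall>\<^sub>F t in at_right t0. \<forall>u\<in>{t0..t}. \<bar>f u - f t0\<bar> < e"
proof -
  obtain d where "d > 0" and d: "\<And>u. \<bar>u - t0\<bar> < d \<Longrightarrow> \<bar>f u - f t0\<bar> < e"
    using assms unfolding continuous_on_iff dist_real_def by blast
  show ?thesis
    unfolding eventually_at_right_field
    by (rule exI[of _ "t0 + d"]) (use \<open>d > 0\<close> d in auto)
qed

lemma integrable_on_if_continuous_on_UNIV: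
  fixes f :: "real \<Rightarrow> real"
  assumes "continuous_on UNIV f"
  shows "f integrable_on {a..b}"
  using assms by (rule integrable_continuous_interval[OF continuous_on_subset]) simp

section \<open>Squares of reflected paths\<close>

definition nonincreasing_where_pos :: "(real \<Rightarrow> real) \<Rightarrow> (real \<Rightarrow> real) \<Rightarrow> bool" where
  "nonincreasing_where_pos g L \<longleftrightarrow> (\<forall>s t. s \<le> t \<longrightarrow> (\<forall>u\<in>{s..t}. 0 < g u) \<longrightarrow> L t \<le> L s)"

locale drift_decomposition =
  fixes g f L :: "real \<Rightarrow> real"
  assumes continuous_g: "continuous_on UNIV g"
    and continuous_f: "continuous_on UNIV f"
    and increment: "\<And>s t. s \<le> t \<Longrightarrow> g t - g s = integral {s..t} f + (L t - L s)"
begin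

lemma uminus: "drift_decomposition (\<lambda>t. - g t) (\<lambda>t. - f t) (\<lambda>t. - L t)"
proof
  fix s t :: real
  assume "s \<le> t"
  then show "- g t - - g s = integral {s..t} (\<lambda>t. - f t) + (- L t - - L s)"
    using increment[of s t] by simp
qed (intro continuous_intros continuous_g continuous_f)+

lemma integrable_f: "f integrable_on {a..b}"
  by (rule integrable_on_if_continuous_on_UNIV[OF continuous_f])

lemma integrable_gf: "(\<lambda>u. g u * f u) integrable_on {a..b}"
  by (intro integrable_on_if_continuous_on_UNIV continuous_intros continuous_g continuous_f)

lemma square_increment_eventually_le_pos:
  assumes push: "nonincreasing_where_pos g L" and "g t0 > 0" and "\<epsilon> > 0"
  shows "\<forall>\<^sub>F t in at_right t0.
    (g t)\<^sup>2 - (g t0)\<^sup>2 - 2 * integral {t0..t} (\<lambda>u. g u * f u) \<le> \<epsilon> * (t - t0)"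
proof -
  define M where "M = \<bar>f t0\<bar> + 1"
  define \<eta> where "\<eta> = min (g t0) (\<epsilon> / (3 * M))"
  have "M > 0" "\<eta> > 0"
    using \<open>g t0 > 0\<close> \<open>\<epsilon> > 0\<close> by (simp_all add: M_def \<eta>_def)
  have "\<forall>\<^sub>F t in at_right t0. t0 < t \<and> (\<forall>u\<in>{t0..t}. \<bar>f u - f t0\<bar> < 1)
      \<and> (\<forall>u\<in>{t0..t}. \<bar>g u - g t0\<bar> < \<eta>)"
    using eventually_at_right_less eventually_at_right_close_on_interval[OF continuous_f]
      eventually_at_right_close_on_interval[OF continuous_g \<open>\<eta> > 0\<close>]
    by (intro eventually_conj) auto
  then show ?thesis
  proof (rule eventually_mono, elim conjE)
    fix t
    assume "t0 < t" and f_near: "\<forall>u\<in>{t0..t}. \<bar>f u - f t0\<bar> < 1"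
      and g_near: "\<forall>u\<in>{t0..t}. \<bar>g u - g t0\<bar> < \<eta>"
    have "\<forall>u\<in>{t0..t}. 0 < g u"
      using g_near by (auto simp: \<eta>_def)
    then have "L t \<le> L t0"
      using push \<open>t0 < t\<close> unfolding nonincreasing_where_pos_def by auto
    then have "g t - g t0 \<le> integral {t0..t} f"
      using increment[of t0 t] \<open>t0 < t\<close> by simp
    moreover have "g t + g t0 > 0"
      using \<open>\<forall>u\<in>{t0..t}. 0 < g u\<close> \<open>t0 < t\<close> \<open>g t0 > 0\<close> by (simp add: add_pos_pos)
    ultimately have "(g t - g t0) * (g t + g t0) \<le> integral {t0..t} f * (g t + g t0)"
      by (intro mult_right_mono) auto
    then have square_increment: "(g t)\<^sup>2 - (g t0)\<^sup>2 \<le> integral {t0..t} f * (g t + g t0)"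
      by (simp add: power2_eq_square algebra_simps)
    have "integral {t0..t} f * (g t + g t0) - 2 * integral {t0..t} (\<lambda>u. g u * f u)
        = integral {t0..t} (\<lambda>u. f u * (g t + g t0)) - integral {t0..t} (\<lambda>u. 2 * (g u * f u))"
      by simp
    also have "\<dots> = integral {t0..t} (\<lambda>u. f u * (g t + g t0) - 2 * (g u * f u))"
      by (intro integral_diff[symmetric] integrable_on_if_continuous_on_UNIV continuous_intros
          continuous_f continuous_g)
    also have "\<dots> \<le> integral {t0..t} (\<lambda>u. \<epsilon>)"
    proof (rule integral_le)
      fix u
      assume u: "u \<in> {t0..t}"
      have "\<bar>g t + g t0 - 2 * g u\<bar> \<le> \<bar>g t - g t0\<bar> + 2 * \<bar>g u - g t0\<bar>"
        by (simp add: abs_real_def)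
      also have "\<dots> < 3 * \<eta>"
        using g_near[rule_format, of t] g_near[rule_format, OF u] \<open>t0 < t\<close> by simp
      also have "\<dots> \<le> \<epsilon> / M"
        by (simp add: \<eta>_def)
      moreover have "\<bar>f u\<bar> \<le> M"
        using f_near u unfolding M_def by force
      ultimately have "\<bar>f u\<bar> * \<bar>g t + g t0 - 2 * g u\<bar> \<le> M * (\<epsilon> / M)"
        by (intro mult_mono) auto
      then have "f u * (g t + g t0 - 2 * g u) \<le> \<epsilon>"
        using abs_ge_self[of "f u * (g t + g t0 - 2 * g u)"] \<open>M > 0\<close> by (simp add: abs_mult)
      then show "f u * (g t + g t0) - 2 * (g u * f u) \<le> \<epsilon>"
        by (simp add: algebra_simps)
    qed (auto intro!: integrable_on_if_continuous_on_UNIV continuous_intros continuous_f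
        continuous_g)
    also have "\<dots> = \<epsilon> * (t - t0)"
      using \<open>t0 < t\<close> by simp
    finally show "(g t)\<^sup>2 - (g t0)\<^sup>2 - 2 * integral {t0..t} (\<lambda>u. g u * f u) \<le> \<epsilon> * (t - t0)"
      using square_increment by linarith
  qed
qed

lemma linear_growth_after_nonpos:
  assumes push: "nonincreasing_where_pos g L" and "t0 \<le> t" and "g t0 \<le> 0"
    and f_bound: "\<forall>u\<in>{t0..t}. \<bar>f u\<bar> \<le> M"
  shows "g t \<le> M * (t - t0)"
proof (cases "g t \<le> 0")
  case True
  moreover have "0 \<le> M * (t - t0)"
    using f_bound \<open>t0 \<le> t\<close> by (force intro: mult_nonneg_nonneg)
  ultimately show ?thesis
    by linarith
next
  case False
  have "0 \<le> M"
    using f_bound \<open>t0 \<le> t\<close> by force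
  \<comment> \<open>Start from the last zero \<open>s\<close> of \<open>g\<close> before \<open>t\<close>: on \<open>(s, t]\<close> the reflection term cannot
    increase.\<close>
  define Z where "Z = {t0..t} \<inter> g -` {..0}"
  have "closed Z"
    unfolding Z_def by (intro continuous_closed_preimage continuous_on_subset[OF continuous_g]) auto
  moreover have "t0 \<in> Z" and "bdd_above Z"
    using \<open>t0 \<le> t\<close> \<open>g t0 \<le> 0\<close> unfolding Z_def by (auto intro: bdd_aboveI[of _ t])
  ultimately have "Sup Z \<in> Z"
    using closed_contains_Sup by blast
  define s where "s = Sup Z"
  have s: "s \<in> Z" "\<And>u. u \<in> Z \<Longrightarrow> u \<le> s"
    using \<open>Sup Z \<in> Z\<close> \<open>bdd_above Z\<close> by (auto simp: s_def cSup_upper)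
  then have "g s \<le> 0" "t0 \<le> s" "s < t"
    using False unfolding Z_def by (auto simp: order.order_iff_strict)
  have "g t - M * (t - t0) \<le> g s'" if "s < s'" "s' \<le> t" for s'
  proof -
    have "\<forall>u\<in>{s'..t}. 0 < g u"
    proof
      fix u
      assume "u \<in> {s'..t}"
      then have "u \<notin> Z"
        using s(2) \<open>s < s'\<close> by force
      then show "0 < g u"
        using \<open>u \<in> {s'..t}\<close> \<open>s < s'\<close> \<open>t0 \<le> s\<close> unfolding Z_def by auto
    qed
    then have "L t \<le> L s'"
      using push \<open>s' \<le> t\<close> unfolding nonincreasing_where_pos_def by blast
    then have "g t - g s' \<le> integral {s'..t} f"
      using increment[OF \<open>s' \<le> t\<close>] by simp
    also have "\<dots> \<le> integral {s'..t} (\<lambda>_. M)"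
      using f_bound that \<open>t0 \<le> s\<close>
      by (intro integral_le integrable_f) (auto simp: abs_le_iff)
    also have "\<dots> = M * (t - s')"
      using that by simp
    also have "\<dots> \<le> M * (t - t0)"
      using that \<open>t0 \<le> s\<close> \<open>0 \<le> M\<close> by (intro mult_left_mono) auto
    finally show ?thesis
      by simp
  qed
  then have "\<forall>\<^sub>F s' in at_right s. g t - M * (t - t0) \<le> g s'"
    unfolding eventually_at_right_field using \<open>s < t\<close> by force
  moreover have "(g \<longlongrightarrow> g s) (at_right s)"
    using continuous_g by (simp add: continuous_on_eq_continuous_at isCont_def filterlim_at_split)
  ultimately have "g t - M * (t - t0) \<le> g s"
    by (intro tendsto_lowerbound) auto
  then show ?thesis
    using \<open>g s \<le> 0\<close> by simp
qed

lemma square_increment_eventually_le_zero: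
  assumes push: "nonincreasing_where_pos g L"
    and push_neg: "nonincreasing_where_pos (\<lambda>t. - g t) (\<lambda>t. - L t)"
    and "g t0 = 0" and "\<epsilon> > 0"
  shows "\<forall>\<^sub>F t in at_right t0.
    (g t)\<^sup>2 - (g t0)\<^sup>2 - 2 * integral {t0..t} (\<lambda>u. g u * f u) \<le> \<epsilon> * (t - t0)"
proof -
  interpret neg: drift_decomposition "\<lambda>t. - g t" "\<lambda>t. - f t" "\<lambda>t. - L t"
    by (rule uminus)
  define M where "M = \<bar>f t0\<bar> + 1"
  define \<eta> where "\<eta> = \<epsilon> / (4 * M)"
  define \<delta> where "\<delta> = \<epsilon> / (2 * M\<^sup>2)"
  have "M > 0" "\<eta> > 0" "\<delta> > 0"
    using \<open>\<epsilon> > 0\<close> by (simp_all add: M_def \<eta>_def \<delta>_def)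
  have "\<forall>\<^sub>F t in at_right t0. t < t0 + \<delta>"
    unfolding eventually_at_right_field using \<open>\<delta> > 0\<close> by (intro exI[of _ "t0 + \<delta>"]) auto
  then have "\<forall>\<^sub>F t in at_right t0. t0 < t \<and> t < t0 + \<delta> \<and> (\<forall>u\<in>{t0..t}. \<bar>f u - f t0\<bar> < 1)
      \<and> (\<forall>u\<in>{t0..t}. \<bar>g u - g t0\<bar> < \<eta>)"
    using eventually_at_right_less eventually_at_right_close_on_interval[OF continuous_f]
      eventually_at_right_close_on_interval[OF continuous_g \<open>\<eta> > 0\<close>]
    by (intro eventually_conj) auto
  then show ?thesis
  proof (rule eventually_mono, elim conjE)
    fix t
    assume "t0 < t" "t < t0 + \<delta>" and f_near: "\<forall>u\<in>{t0..t}. \<bar>f u - f t0\<bar> < 1"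
      and g_near: "\<forall>u\<in>{t0..t}. \<bar>g u - g t0\<bar> < \<eta>"
    have f_bound: "\<forall>u\<in>{t0..t}. \<bar>f u\<bar> \<le> M"
      using f_near unfolding M_def by force
    have "g t \<le> M * (t - t0)"
      using linear_growth_after_nonpos[OF push] \<open>t0 < t\<close> \<open>g t0 = 0\<close> f_bound by simp
    moreover have "- g t \<le> M * (t - t0)"
      using neg.linear_growth_after_nonpos[OF push_neg] \<open>t0 < t\<close> \<open>g t0 = 0\<close> f_bound by simp
    ultimately have "(g t)\<^sup>2 \<le> (M * (t - t0))\<^sup>2"
      using \<open>t0 < t\<close> \<open>M > 0\<close> by (simp add: abs_le_square_iff[symmetric] abs_le_iff)
    also have "\<dots> = M\<^sup>2 * (t - t0) * (t - t0)"
      by (simp add: power2_eq_square)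
    also have "\<dots> \<le> M\<^sup>2 * \<delta> * (t - t0)"
      using \<open>t0 < t\<close> \<open>t < t0 + \<delta>\<close> by (intro mult_right_mono mult_left_mono) auto
    also have "\<dots> = \<epsilon> / 2 * (t - t0)"
      using \<open>M > 0\<close> by (simp add: \<delta>_def)
    finally have square_bound: "(g t)\<^sup>2 \<le> \<epsilon> / 2 * (t - t0)" .
    have "- integral {t0..t} (\<lambda>u. g u * f u) = integral {t0..t} (\<lambda>u. - (g u * f u))"
      by simp
    also have "\<dots> \<le> integral {t0..t} (\<lambda>u. \<eta> * M)"
    proof (intro integral_le integrable_neg integrable_gf)
      fix u
      assume u: "u \<in> {t0..t}"
      have "\<bar>g u\<bar> * \<bar>f u\<bar> \<le> \<eta> * M"
        using g_near u f_bound \<open>g t0 = 0\<close> by (intro mult_mono) (auto simp: less_imp_le)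
      then show "- (g u * f u) \<le> \<eta> * M"
        using abs_ge_self[of "- (g u * f u)"] by (simp add: abs_mult)
    qed auto
    also have "\<dots> = \<epsilon> / 4 * (t - t0)"
      using \<open>t0 < t\<close> \<open>M > 0\<close> by (simp add: \<eta>_def)
    finally show "(g t)\<^sup>2 - (g t0)\<^sup>2 - 2 * integral {t0..t} (\<lambda>u. g u * f u) \<le> \<epsilon> * (t - t0)"
      using square_bound \<open>g t0 = 0\<close> by simp
  qed
qed

lemma square_increment_eventually_le:
  assumes push: "nonincreasing_where_pos g L"
    and push_neg: "nonincreasing_where_pos (\<lambda>t. - g t) (\<lambda>t. - L t)"
    and "\<epsilon> > 0"
  shows "\<forall>\<^sub>F t in at_right t0.
    (g t)\<^sup>2 - (g t0)\<^sup>2 - 2 * integral {t0..t} (\<lambda>u. g u * f u) \<le> \<epsilon> * (t - t0)"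
proof -
  interpret neg: drift_decomposition "\<lambda>t. - g t" "\<lambda>t. - f t" "\<lambda>t. - L t"
    by (rule uminus)
  consider "g t0 > 0" | "g t0 < 0" | "g t0 = 0"
    by linarith
  then show ?thesis
  proof cases
    case 1
    then show ?thesis
      using square_increment_eventually_le_pos[OF push _ \<open>\<epsilon> > 0\<close>] by blast
  next
    case 2
    then show ?thesis
      using neg.square_increment_eventually_le_pos[OF push_neg _ \<open>\<epsilon> > 0\<close>] by simp
  next
    case 3
    then show ?thesis
      using square_increment_eventually_le_zero[OF push push_neg _ \<open>\<epsilon> > 0\<close>] by blast
  qed
qed

lemma square_increment_le_integral:
  assumes push: "nonincreasing_where_pos g L"
    and push_neg: "nonincreasing_where_pos (\<lambda>t. - g t) (\<lambda>t. - L t)"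
    and "S \<le> T"
  shows "(g T)\<^sup>2 - (g S)\<^sup>2 \<le> 2 * integral {S..T} (\<lambda>u. g u * f u)"
proof -
  define \<phi> where "\<phi> t = (g t)\<^sup>2 - 2 * integral {S..t} (\<lambda>u. g u * f u)" for t
  have "\<phi> T \<le> \<phi> S"
  proof (rule dini_upper_right_nonpos_imp_le[OF \<open>S \<le> T\<close>])
    show "continuous_on {S..T} \<phi>"
      unfolding \<phi>_def
      by (intro continuous_intros continuous_on_subset[OF continuous_g]
          indefinite_integral_continuous_1 integrable_gf) auto
    fix t0 \<epsilon> :: real
    assume "t0 \<in> {S..<T}" and "\<epsilon> > 0"
    have "\<forall>\<^sub>F t in at_right t0. integral {S..t} (\<lambda>u. g u * f u)
        = integral {S..t0} (\<lambda>u. g u * f u) + integral {t0..t} (\<lambda>u. g u * f u)"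
      using eventually_at_right_less
    proof (rule eventually_mono)
      fix t
      assume "t0 < t"
      then show "integral {S..t} (\<lambda>u. g u * f u)
          = integral {S..t0} (\<lambda>u. g u * f u) + integral {t0..t} (\<lambda>u. g u * f u)"
        using \<open>t0 \<in> {S..<T}\<close>
        by (intro Henstock_Kurzweil_Integration.integral_combine[symmetric] integrable_gf) auto
    qed
    with square_increment_eventually_le[OF push push_neg \<open>\<epsilon> > 0\<close>, of t0]
    show "\<forall>\<^sub>F t in at_right t0. \<phi> t \<le> \<phi> t0 + \<epsilon> * (t - t0)"
      by eventually_elim (simp add: \<phi>_def)
  qed
  then show ?thesis
    by (simp add: \<phi>_def)
qed

end

section \<open>Convex potentials\<close>

lemma DERIV_even_imp_odd:
  fixes V V' :: "real \<Rightarrow> real"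
  assumes deriv: "\<And>x. (V has_real_derivative V' x) (at x)" and even: "\<And>x. V (- x) = V x"
  shows "V' (- z) = - V' z"
proof -
  have "((\<lambda>x. V (- x)) has_real_derivative - V' (- z)) (at z)"
    using deriv[of "- z"] by (simp add: DERIV_mirror)
  then have "(V has_real_derivative - V' (- z)) (at z)"
    using even by simp
  then show ?thesis
    using DERIV_unique deriv by force
qed

lemma MVT_any_order:
  fixes f f' :: "real \<Rightarrow> real"
  assumes "\<And>x. (f has_real_derivative f' x) (at x)"
  shows "\<exists>z. f p - f q = (p - q) * f' z"
proof -
  consider "q < p" | "p < q" | "p = q"
    by linarith
  then show ?thesis
  proof cases
    case 1
    then show ?thesis
      using MVT2[of q p f f'] assms by blast
  next
    case 2
    then obtain z where "f q - f p = (q - p) * f' z"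
      using MVT2[of p q f f'] assms by blast
    then show ?thesis
      by (intro exI[of _ z]) (simp add: algebra_simps)
  qed simp
qed

lemma strongly_monotone_of_deriv_lower_bound:
  fixes V' V'' :: "real \<Rightarrow> real"
  assumes deriv: "\<And>x. (V' has_real_derivative V'' x) (at x)" and lower: "\<And>x. aV \<le> V'' x"
  shows "aV * (p - q)\<^sup>2 \<le> (V' p - V' q) * (p - q)"
proof -
  obtain z where "V' p - V' q = (p - q) * V'' z"
    using MVT_any_order[OF deriv] by blast
  then show ?thesis
    using lower[of z] by (simp add: power2_eq_square mult_right_mono mult.assoc mult.left_commute)
qed

lemma lipschitz_of_deriv_bounds:
  fixes V' V'' :: "real \<Rightarrow> real"
  assumes deriv: "\<And>x. (V' has_real_derivative V'' x) (at x)"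
    and lower: "\<And>x. aV \<le> V'' x" and upper: "\<And>x. V'' x \<le> AV" and "0 \<le> aV"
  shows "\<bar>V' p - V' q\<bar> \<le> AV * \<bar>p - q\<bar>"
proof -
  obtain z where "V' p - V' q = (p - q) * V'' z"
    using MVT_any_order[OF deriv] by blast
  moreover have "\<bar>V'' z\<bar> \<le> AV"
    using \<open>0 \<le> aV\<close> lower[of z] upper[of z] by simp
  ultimately show ?thesis
    by (simp add: abs_mult mult.commute mult_right_mono)
qed

section \<open>Summation by parts on the lattice\<close>

lemma adj_iff:
  "adj x y \<longleftrightarrow> y \<in> {(fst x + 1, snd x), (fst x - 1, snd x), (fst x, snd x + 1), (fst x, snd x - 1)}"
  unfolding adj_def by (cases x, cases y) auto

lemma finite_adj: "finite {y. adj x y}"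
  unfolding adj_iff by simp

lemma adj_commute: "adj x y \<longleftrightarrow> adj y x"
  unfolding adj_def by (simp add: abs_minus_commute)

lemma adj_iff_lattice_edge: "adj x y \<longleftrightarrow> (x, y) \<in> lattice_edges \<or> (y, x) \<in> lattice_edges"
  unfolding adj_iff lattice_edges_def by auto

lemma lattice_edges_asym: "(x, y) \<in> lattice_edges \<Longrightarrow> (y, x) \<notin> lattice_edges"
  unfolding lattice_edges_def by (cases x) (auto simp: prod_eq_iff)

lemma finite_Dstar:
  assumes "finite D"
  shows "finite (Dstar D)"
proof (rule finite_subset)
  show "Dstar D \<subseteq> (\<Union>x\<in>D. {x} \<times> {y. adj x y} \<union> {y. adj x y} \<times> {x})"
    unfolding Dstar_def using adj_iff_lattice_edge adj_commute by blast
  show "finite (\<Union>x\<in>D. {x} \<times> {y. adj x y} \<union> {y. adj x y} \<times> {x})"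
    using assms finite_adj by blast
qed

text \<open>Discrete Green identity: extending \<open>u\<close> by \<open>0\<close> outside \<open>D\<close> lets every edge of \<open>D\<^sup>*\<close> collect the
  contributions of both of its endpoints.\<close>

lemma sum_adj_eq_sum_Dstar:
  fixes u :: "site \<Rightarrow> real"
  assumes "finite D" and antisym: "\<And>x y. \<Delta> y x = - \<Delta> x y"
  shows "(\<Sum>x\<in>D. u x * (\<Sum>y\<in>{y. adj x y}. \<Delta> x y))
    = - (\<Sum>e\<in>Dstar D. grad (ext D u (\<lambda>_. 0)) e * \<Delta> (fst e) (snd e))"
proof -
  define u0 where "u0 = ext D u (\<lambda>_. 0)"
  define F where "F p = u0 (fst p) * \<Delta> (fst p) (snd p)" for p
  define Q where "Q = Dstar D \<union> prod.swap ` Dstar D"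
  have "finite (Dstar D)"
    using \<open>finite D\<close> by (rule finite_Dstar)
  have "(\<Sum>x\<in>D. u x * (\<Sum>y\<in>{y. adj x y}. \<Delta> x y)) = (\<Sum>x\<in>D. \<Sum>y\<in>{y. adj x y}. F (x, y))"
    by (simp add: sum_distrib_left F_def u0_def ext_def cong: sum.cong)
  also have "\<dots> = (\<Sum>p\<in>Sigma D (\<lambda>x. {y. adj x y}). F p)"
    using sum.Sigma[OF \<open>finite D\<close>, of "\<lambda>x. {y. adj x y}" "\<lambda>x y. F (x, y)"] finite_adj
    by (simp add: split_def)
  also have "\<dots> = (\<Sum>p\<in>Q. F p)"
  proof (rule sum.mono_neutral_left)
    show "finite Q"
      using \<open>finite (Dstar D)\<close> by (simp add: Q_def)
    show "Sigma D (\<lambda>x. {y. adj x y}) \<subseteq> Q"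
      unfolding Q_def Dstar_def using adj_iff_lattice_edge by fastforce
    show "\<forall>p\<in>Q - Sigma D (\<lambda>x. {y. adj x y}). F p = 0"
    proof
      fix p
      assume p: "p \<in> Q - Sigma D (\<lambda>x. {y. adj x y})"
      then have "adj (fst p) (snd p)"
        using adj_iff_lattice_edge unfolding Q_def Dstar_def by auto
      then have "fst p \<notin> D"
        using p by (cases p) auto
      then show "F p = 0"
        by (simp add: F_def u0_def ext_def)
    qed
  qed
  also have "\<dots> = (\<Sum>e\<in>Dstar D. F e) + (\<Sum>e\<in>Dstar D. F (prod.swap e))"
  proof -
    have "Dstar D \<inter> prod.swap ` Dstar D = {}"
      unfolding Dstar_def using lattice_edges_asym by auto
    then show ?thesis
      using \<open>finite (Dstar D)\<close> by (simp add: Q_def sum.union_disjoint sum.reindex)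
  qed
  also have "\<dots> = (\<Sum>e\<in>Dstar D. F e + F (prod.swap e))"
    by (simp add: sum.distrib)
  also have "\<dots> = (\<Sum>e\<in>Dstar D. - (grad u0 e * \<Delta> (fst e) (snd e)))"
  proof (rule sum.cong[OF refl])
    fix e
    show "F e + F (prod.swap e) = - (grad u0 e * \<Delta> (fst e) (snd e))"
      using antisym[of "fst e" "snd e"] by (simp add: F_def grad_def algebra_simps)
  qed
  also have "\<dots> = - (\<Sum>e\<in>Dstar D. grad u0 e * \<Delta> (fst e) (snd e))"
    by (simp add: sum_negf)
  finally show ?thesis
    by (simp add: u0_def)
qed

lemma abs_grad_ext_diff:
  assumes "e \<in> Dstar D"
  shows "\<bar>grad (ext D u \<phi>) e - grad (ext D u (\<lambda>_. 0)) e\<bar>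
    = (if e \<in> bdry_edges D then \<bar>\<phi> (bdry_pt D e)\<bar> else 0)"
proof -
  obtain x y where e: "e = (x, y)" "(x, y) \<in> lattice_edges" "x \<in> D \<or> y \<in> D"
    using assms unfolding Dstar_def by auto
  then have "adj x y" "adj y x"
    using adj_iff_lattice_edge by blast+
  with e show ?thesis
    by (auto simp: bdry_edges_def bdry_def bdry_pt_def grad_def ext_def)
qed

lemma drift_difference_pairing_le:
  fixes V' :: "real \<Rightarrow> real" and u u' \<psi> \<psi>' :: "site \<Rightarrow> real"
  assumes "finite D" and odd: "\<And>z. V' (- z) = - V' z"
    and monotone: "\<And>p q. aV * (p - q)\<^sup>2 \<le> (V' p - V' q) * (p - q)"
    and lipschitz: "\<And>p q. \<bar>V' p - V' q\<bar> \<le> AV * \<bar>p - q\<bar>"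
  shows "(\<Sum>x\<in>D. (u x - u' x) * (drift V' D \<psi> u x - drift V' D \<psi>' u' x))
    \<le> - aV * (\<Sum>e\<in>Dstar D. (grad (\<lambda>x. ext D u \<psi> x - ext D u' \<psi>' x) e)\<^sup>2)
      + AV * (\<Sum>e\<in>bdry_edges D. \<bar>\<psi> (bdry_pt D e) - \<psi>' (bdry_pt D e)\<bar>
          * \<bar>grad (\<lambda>x. ext D u \<psi> x - ext D u' \<psi>' x) e\<bar>)"
proof -
  define H where "H = (\<lambda>x. ext D u \<psi> x - ext D u' \<psi>' x)"
  define \<Delta> where "\<Delta> x y = V' (ext D u \<psi> y - ext D u \<psi> x) - V' (ext D u' \<psi>' y - ext D u' \<psi>' x)"
    for x y
  define u0 where "u0 = ext D (\<lambda>x. u x - u' x) (\<lambda>_. 0)"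
  define B where "B e = \<bar>\<psi> (bdry_pt D e) - \<psi>' (bdry_pt D e)\<bar> * \<bar>grad H e\<bar>" for e
  have "(\<Sum>x\<in>D. (u x - u' x) * (drift V' D \<psi> u x - drift V' D \<psi>' u' x))
      = (\<Sum>x\<in>D. (u x - u' x) * (\<Sum>y\<in>{y. adj x y}. \<Delta> x y))"
    by (simp add: drift_def \<Delta>_def sum_subtractf)
  also have "\<dots> = (\<Sum>e\<in>Dstar D. - (grad u0 e * \<Delta> (fst e) (snd e)))"
    unfolding u0_def sum_negf
  proof (rule sum_adj_eq_sum_Dstar[OF \<open>finite D\<close>])
    fix x y
    show "\<Delta> y x = - \<Delta> x y"
      using odd[of "ext D u \<psi> y - ext D u \<psi> x"] odd[of "ext D u' \<psi>' y - ext D u' \<psi>' x"]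
      by (simp add: \<Delta>_def)
  qed
  also have "\<dots> \<le> (\<Sum>e\<in>Dstar D. - aV * (grad H e)\<^sup>2 + AV * (if e \<in> bdry_edges D then B e else 0))"
  proof (rule sum_mono)
    fix e
    assume "e \<in> Dstar D"
    define d where "d = grad H e"
    have "d = (ext D u \<psi> (snd e) - ext D u \<psi> (fst e)) - (ext D u' \<psi>' (snd e) - ext D u' \<psi>' (fst e))"
      by (simp add: d_def H_def grad_def)
    then have mono: "aV * d\<^sup>2 \<le> d * \<Delta> (fst e) (snd e)"
      and lip: "\<bar>\<Delta> (fst e) (snd e)\<bar> \<le> AV * \<bar>d\<bar>"
      using monotone lipschitz unfolding \<Delta>_def by (simp_all add: mult.commute)
    have "H = ext D (\<lambda>x. u x - u' x) (\<lambda>x. \<psi> x - \<psi>' x)"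
      by (auto simp: H_def ext_def)
    then have correction: "\<bar>d - grad u0 e\<bar>
        = (if e \<in> bdry_edges D then \<bar>\<psi> (bdry_pt D e) - \<psi>' (bdry_pt D e)\<bar> else 0)"
      unfolding d_def u0_def using abs_grad_ext_diff[OF \<open>e \<in> Dstar D\<close>] by simp
    have "(d - grad u0 e) * \<Delta> (fst e) (snd e) \<le> \<bar>d - grad u0 e\<bar> * \<bar>\<Delta> (fst e) (snd e)\<bar>"
      by (metis abs_ge_self abs_mult)
    also have "\<dots> \<le> \<bar>d - grad u0 e\<bar> * (AV * \<bar>d\<bar>)"
      using lip by (intro mult_left_mono) auto
    finally have "- (grad u0 e * \<Delta> (fst e) (snd e)) \<le> - aV * d\<^sup>2 + AV * (\<bar>d - grad u0 e\<bar> * \<bar>d\<bar>)"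
      using mono by (simp add: algebra_simps)
    then show "- (grad u0 e * \<Delta> (fst e) (snd e))
        \<le> - aV * (grad H e)\<^sup>2 + AV * (if e \<in> bdry_edges D then B e else 0)"
      using correction by (cases "e \<in> bdry_edges D") (simp_all add: B_def d_def)
  qed
  also have "\<dots> = - aV * (\<Sum>e\<in>Dstar D. (grad H e)\<^sup>2) + AV * (\<Sum>e\<in>bdry_edges D. B e)"
  proof -
    have "Dstar D \<inter> bdry_edges D = bdry_edges D"
      unfolding bdry_edges_def Dstar_def by auto
    then have "(\<Sum>e\<in>Dstar D. if e \<in> bdry_edges D then B e else 0) = (\<Sum>e\<in>bdry_edges D. B e)"
      using sum.inter_restrict[OF finite_Dstar[OF \<open>finite D\<close>], of B "bdry_edges D"] by simp
    then show ?thesis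
      by (simp add: sum_subtractf sum_distrib_left[symmetric])
  qed
  finally show ?thesis
    by (simp add: H_def B_def)
qed

section \<open>Differences of conditioned Langevin solutions\<close>

lemma continuous_on_ext:
  assumes "\<forall>x\<in>D. continuous_on UNIV (\<lambda>t. h t x)"
  shows "continuous_on UNIV (\<lambda>t. ext D (h t) \<psi> y)"
  using assms by (cases "y \<in> D") (auto simp: ext_def)

lemma continuous_on_drift:
  assumes "continuous_on UNIV V'" and "\<forall>x\<in>D. continuous_on UNIV (\<lambda>t. h t x)"
  shows "continuous_on UNIV (\<lambda>t. drift V' D \<psi> (h t) x)"
  unfolding drift_def
  by (intro continuous_on_sum continuous_on_compose2[OF assms(1)] continuous_intros
      continuous_on_ext assms(2)) auto

lemma langevin_sol_continuous:
  "langevin_sol V' D \<psi> a b W h la lb \<Longrightarrow> \<forall>x\<in>D. continuous_on UNIV (\<lambda>t. h t x)"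
  unfolding langevin_sol_def by blast

lemma langevin_sol_between:
  "langevin_sol V' D \<psi> a b W h la lb \<Longrightarrow> x \<in> D \<Longrightarrow> a x \<le> ereal (h t x) \<and> ereal (h t x) \<le> b x"
  unfolding langevin_sol_def by blast

lemma langevin_sol_mono:
  "langevin_sol V' D \<psi> a b W h la lb \<Longrightarrow> x \<in> D \<Longrightarrow> mono (\<lambda>t. la t x) \<and> mono (\<lambda>t. lb t x)"
  unfolding langevin_sol_def by blast

lemma langevin_sol_la_const:
  "langevin_sol V' D \<psi> a b W h la lb \<Longrightarrow> x \<in> D \<Longrightarrow> s \<le> t \<Longrightarrow>
    (\<forall>u\<in>{s..t}. ereal (h u x) \<noteq> a x) \<Longrightarrow> la s x = la t x"
  unfolding langevin_sol_def by blast

lemma langevin_sol_lb_const: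
  "langevin_sol V' D \<psi> a b W h la lb \<Longrightarrow> x \<in> D \<Longrightarrow> s \<le> t \<Longrightarrow>
    (\<forall>u\<in>{s..t}. ereal (h u x) \<noteq> b x) \<Longrightarrow> lb s x = lb t x"
  unfolding langevin_sol_def by blast

lemma langevin_sol_increment:
  "langevin_sol V' D \<psi> a b W h la lb \<Longrightarrow> x \<in> D \<Longrightarrow> s \<le> t \<Longrightarrow>
    h t x - h s x = integral {s..t} (\<lambda>u. drift V' D \<psi> (h u) x)
      + (la t x - la s x) - (lb t x - lb s x) + sqrt 2 * (W t x - W s x)"
  unfolding langevin_sol_def by blast

lemma langevin_difference_nonincreasing_where_pos:
  assumes sol: "langevin_sol V' D \<psi> a b W h la lb"
    and sol': "langevin_sol V' D \<psi>' a b W h' la' lb'" and "x \<in> D"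
  shows "nonincreasing_where_pos (\<lambda>t. h t x - h' t x) (\<lambda>t. (la t x - lb t x) - (la' t x - lb' t x))"
  unfolding nonincreasing_where_pos_def
proof (intro allI impI)
  fix s t :: real
  assume "s \<le> t" and pos: "\<forall>u\<in>{s..t}. 0 < h u x - h' u x"
  \<comment> \<open>While \<open>h' < h\<close>, the solution \<open>h\<close> is off its lower barrier and \<open>h'\<close> is off its upper one.\<close>
  have "ereal (h u x) \<noteq> a x" "ereal (h' u x) \<noteq> b x" if "u \<in> {s..t}" for u
  proof -
    have "a x \<le> ereal (h' u x)" "ereal (h' u x) < ereal (h u x)" "ereal (h u x) \<le> b x"
      using langevin_sol_between[OF sol] langevin_sol_between[OF sol'] pos that \<open>x \<in> D\<close> by auto
    then have "a x < ereal (h u x)" "ereal (h' u x) < b x"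
      using le_less_trans less_le_trans by blast+
    then show "ereal (h u x) \<noteq> a x" "ereal (h' u x) \<noteq> b x"
      by auto
  qed
  then have "la s x = la t x" "lb' s x = lb' t x"
    using langevin_sol_la_const[OF sol \<open>x \<in> D\<close> \<open>s \<le> t\<close>]
      langevin_sol_lb_const[OF sol' \<open>x \<in> D\<close> \<open>s \<le> t\<close>] by blast+
  moreover have "lb s x \<le> lb t x" "la' s x \<le> la' t x"
    using langevin_sol_mono[OF sol \<open>x \<in> D\<close>] langevin_sol_mono[OF sol' \<open>x \<in> D\<close>] \<open>s \<le> t\<close>
    by (auto dest: monoD)
  ultimately show "la t x - lb t x - (la' t x - lb' t x) \<le> la s x - lb s x - (la' s x - lb' s x)"
    by simp
qed

lemma langevin_difference_drift_decomposition:
  assumes sol: "langevin_sol V' D \<psi> a b W h la lb"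
    and sol': "langevin_sol V' D \<psi>' a b W h' la' lb'"
    and "continuous_on UNIV V'" and "x \<in> D"
  shows "drift_decomposition (\<lambda>t. h t x - h' t x)
    (\<lambda>t. drift V' D \<psi> (h t) x - drift V' D \<psi>' (h' t) x)
    (\<lambda>t. (la t x - lb t x) - (la' t x - lb' t x))"
proof
  show "continuous_on UNIV (\<lambda>t. h t x - h' t x)"
    using langevin_sol_continuous[OF sol] langevin_sol_continuous[OF sol'] \<open>x \<in> D\<close>
    by (intro continuous_intros) auto
  show "continuous_on UNIV (\<lambda>t. drift V' D \<psi> (h t) x - drift V' D \<psi>' (h' t) x)"
    using langevin_sol_continuous[OF sol] langevin_sol_continuous[OF sol']
    by (intro continuous_intros continuous_on_drift \<open>continuous_on UNIV V'\<close>)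
  fix s t :: real
  assume "s \<le> t"
  have "integral {s..t} (\<lambda>u. drift V' D \<psi> (h u) x - drift V' D \<psi>' (h' u) x)
      = integral {s..t} (\<lambda>u. drift V' D \<psi> (h u) x) - integral {s..t} (\<lambda>u. drift V' D \<psi>' (h' u) x)"
    using langevin_sol_continuous[OF sol] langevin_sol_continuous[OF sol']
    by (intro integral_diff integrable_on_if_continuous_on_UNIV continuous_on_drift
        \<open>continuous_on UNIV V'\<close>)
  moreover have "h t x - h s x = integral {s..t} (\<lambda>u. drift V' D \<psi> (h u) x)
      + (la t x - la s x) - (lb t x - lb s x) + sqrt 2 * (W t x - W s x)"
    and "h' t x - h' s x = integral {s..t} (\<lambda>u. drift V' D \<psi>' (h' u) x)
      + (la' t x - la' s x) - (lb' t x - lb' s x) + sqrt 2 * (W t x - W s x)"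
    using langevin_sol_increment[OF sol \<open>x \<in> D\<close> \<open>s \<le> t\<close>]
      langevin_sol_increment[OF sol' \<open>x \<in> D\<close> \<open>s \<le> t\<close>] by blast+
  ultimately show "h t x - h' t x - (h s x - h' s x)
      = integral {s..t} (\<lambda>u. drift V' D \<psi> (h u) x - drift V' D \<psi>' (h' u) x)
        + ((la t x - lb t x) - (la' t x - lb' t x) - ((la s x - lb s x) - (la' s x - lb' s x)))"
    by linarith
qed

lemma langevin_difference_square_increment:
  assumes sol: "langevin_sol V' D \<psi> a b W h la lb"
    and sol': "langevin_sol V' D \<psi>' a b W h' la' lb'"
    and "continuous_on UNIV V'" and "x \<in> D" and "S \<le> T"
  shows "(h T x - h' T x)\<^sup>2 - (h S x - h' S x)\<^sup>2
    \<le> 2 * integral {S..T} (\<lambda>u. (h u x - h' u x) * (drift V' D \<psi> (h u) x - drift V' D \<psi>' (h' u) x))"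
proof -
  interpret drift_decomposition "\<lambda>t. h t x - h' t x"
    "\<lambda>t. drift V' D \<psi> (h t) x - drift V' D \<psi>' (h' t) x"
    "\<lambda>t. (la t x - lb t x) - (la' t x - lb' t x)"
    by (rule langevin_difference_drift_decomposition[OF sol sol' assms(3,4)])
  have "nonincreasing_where_pos (\<lambda>t. h t x - h' t x) (\<lambda>t. (la t x - lb t x) - (la' t x - lb' t x))"
    by (rule langevin_difference_nonincreasing_where_pos[OF sol sol' \<open>x \<in> D\<close>])
  moreover have "nonincreasing_where_pos (\<lambda>t. - (h t x - h' t x))
      (\<lambda>t. - ((la t x - lb t x) - (la' t x - lb' t x)))"
    using langevin_difference_nonincreasing_where_pos[OF sol' sol \<open>x \<in> D\<close>] by simp
  ultimately show ?thesis
    by (rule square_increment_le_integral[OF _ _ \<open>S \<le> T\<close>])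
qed

lemma continuous_on_grad_ext_diff:
  assumes "\<forall>x\<in>D. continuous_on UNIV (\<lambda>t. h t x)" and "\<forall>x\<in>D. continuous_on UNIV (\<lambda>t. h' t x)"
  shows "continuous_on UNIV (\<lambda>t. grad (\<lambda>x. ext D (h t) \<psi> x - ext D (h' t) \<psi>' x) e)"
  unfolding grad_def by (intro continuous_intros continuous_on_ext assms)

lemma langevin_difference_energy_inequality:
  fixes V' :: "real \<Rightarrow> real"
  assumes "finite D"
    and sol: "langevin_sol V' D \<psi> a b W h la lb"
    and sol': "langevin_sol V' D \<psi>' a b W h' la' lb'"
    and odd: "\<And>z. V' (- z) = - V' z"
    and monotone: "\<And>p q. aV * (p - q)\<^sup>2 \<le> (V' p - V' q) * (p - q)"
    and lipschitz: "\<And>p q. \<bar>V' p - V' q\<bar> \<le> AV * \<bar>p - q\<bar>"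
    and "continuous_on UNIV V'" and "S \<le> T"
  shows "(\<Sum>x\<in>D. (h T x - h' T x)\<^sup>2) - (\<Sum>x\<in>D. (h S x - h' S x)\<^sup>2)
    \<le> 2 * (- aV * integral {S..T} (\<lambda>t. \<Sum>e\<in>Dstar D.
              (grad (\<lambda>x. ext D (h t) \<psi> x - ext D (h' t) \<psi>' x) e)\<^sup>2)
         + AV * integral {S..T} (\<lambda>t. \<Sum>e\<in>bdry_edges D.
              \<bar>\<psi> (bdry_pt D e) - \<psi>' (bdry_pt D e)\<bar>
              * \<bar>grad (\<lambda>x. ext D (h t) \<psi> x - ext D (h' t) \<psi>' x) e\<bar>))"
  (is "_ \<le> 2 * (- aV * integral {S..T} ?A + AV * integral {S..T} ?B)")
proof -
  note continuous = langevin_sol_continuous[OF sol] langevin_sol_continuous[OF sol']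
  define P where "P x u = (h u x - h' u x) * (drift V' D \<psi> (h u) x - drift V' D \<psi>' (h' u) x)"
    for x u
  have integrable: "F integrable_on {S..T}" if "continuous_on UNIV F" for F :: "real \<Rightarrow> real"
    using that by (rule integrable_on_if_continuous_on_UNIV)
  have continuous_P: "continuous_on UNIV (P x)" if "x \<in> D" for x
    unfolding P_def using continuous that
    by (intro continuous_intros continuous_on_drift \<open>continuous_on UNIV V'\<close>) auto
  have "(\<Sum>x\<in>D. (h T x - h' T x)\<^sup>2) - (\<Sum>x\<in>D. (h S x - h' S x)\<^sup>2)
      = (\<Sum>x\<in>D. (h T x - h' T x)\<^sup>2 - (h S x - h' S x)\<^sup>2)"
    by (simp add: sum_subtractf)
  also have "\<dots> \<le> (\<Sum>x\<in>D. 2 * integral {S..T} (P x))"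
    unfolding P_def
    by (intro sum_mono langevin_difference_square_increment[OF sol sol' \<open>continuous_on UNIV V'\<close>
          _ \<open>S \<le> T\<close>])
  also have "\<dots> = 2 * integral {S..T} (\<lambda>u. \<Sum>x\<in>D. P x u)"
    using \<open>finite D\<close> continuous_P by (simp add: integral_sum integrable sum_distrib_left)
  also have "integral {S..T} (\<lambda>u. \<Sum>x\<in>D. P x u) \<le> integral {S..T} (\<lambda>t. - aV * ?A t + AV * ?B t)"
    unfolding P_def
    by (intro integral_le integrable
        drift_difference_pairing_le[OF \<open>finite D\<close> odd monotone lipschitz] continuous_intros continuous_on_grad_ext_diff continuous continuous_P[unfolded P_def])
  also have "\<dots> = - aV * integral {S..T} ?A + AV * integral {S..T} ?B"
    by (subst integral_add) (auto intro!: integrable continuous_intros continuous_on_grad_ext_diff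
        continuous)
  finally show ?thesis
    by simp
qed

lemma absorb_into_left:
  fixes X Y P Q \<alpha> \<beta> :: real
  assumes "0 < \<alpha>" and "0 \<le> X" "0 \<le> Y" "0 \<le> P" "0 \<le> Q" and "X - Y \<le> - \<alpha> * P + \<beta> * Q"
  shows "X + P \<le> max 1 \<beta> / min 1 \<alpha> * (Y + Q)"
proof -
  have "min 1 \<alpha> * X \<le> 1 * X" and "min 1 \<alpha> * P \<le> \<alpha> * P"
    using assms by (intro mult_right_mono; simp)+
  then have "min 1 \<alpha> * (X + P) \<le> X + \<alpha> * P"
    by (simp add: distrib_left)
  also have "\<dots> \<le> Y + \<beta> * Q"
    using assms by simp
  also have "\<dots> \<le> max 1 \<beta> * (Y + Q)"
  proof -
    have "1 * Y \<le> max 1 \<beta> * Y" and "\<beta> * Q \<le> max 1 \<beta> * Q"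
      using assms by (intro mult_right_mono; simp)+
    then show ?thesis
      by (simp add: distrib_left)
  qed
  finally show ?thesis
    using \<open>0 < \<alpha>\<close> by (simp add: field_simps)
qed

lemma langevin_difference_energy_estimate:
  fixes V' :: "real \<Rightarrow> real"
  assumes "finite D"
    and sol: "langevin_sol V' D \<psi> a b W h la lb"
    and sol': "langevin_sol V' D \<psi>' a b W h' la' lb'"
    and odd: "\<And>z. V' (- z) = - V' z"
    and monotone: "\<And>p q. aV * (p - q)\<^sup>2 \<le> (V' p - V' q) * (p - q)"
    and lipschitz: "\<And>p q. \<bar>V' p - V' q\<bar> \<le> AV * \<bar>p - q\<bar>"
    and "continuous_on UNIV V'" and "0 < aV" and "S \<le> T"
  shows "(\<Sum>x\<in>D. (h T x - h' T x)\<^sup>2)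
      + integral {S..T} (\<lambda>t. \<Sum>e\<in>Dstar D. (grad (\<lambda>x. ext D (h t) \<psi> x - ext D (h' t) \<psi>' x) e)\<^sup>2)
    \<le> max 1 (2 * AV) / min 1 (2 * aV) * ((\<Sum>x\<in>D. (h S x - h' S x)\<^sup>2)
      + integral {S..T} (\<lambda>t. \<Sum>e\<in>bdry_edges D. \<bar>\<psi> (bdry_pt D e) - \<psi>' (bdry_pt D e)\<bar>
          * \<bar>grad (\<lambda>x. ext D (h t) \<psi> x - ext D (h' t) \<psi>' x) e\<bar>))"
proof (rule absorb_into_left)
  note continuous = langevin_sol_continuous[OF sol] langevin_sol_continuous[OF sol']
  show "0 < 2 * aV"
    using \<open>0 < aV\<close> by simp
  show "0 \<le> integral {S..T} (\<lambda>t. \<Sum>e\<in>Dstar D. (grad (\<lambda>x. ext D (h t) \<psi> x - ext D (h' t) \<psi>' x) e)\<^sup>2)"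
    and "0 \<le> integral {S..T} (\<lambda>t. \<Sum>e\<in>bdry_edges D. \<bar>\<psi> (bdry_pt D e) - \<psi>' (bdry_pt D e)\<bar>
          * \<bar>grad (\<lambda>x. ext D (h t) \<psi> x - ext D (h' t) \<psi>' x) e\<bar>)"
    by (intro integral_nonneg integrable_on_if_continuous_on_UNIV continuous_intros
        continuous_on_grad_ext_diff continuous sum_nonneg; simp)+
  show "(\<Sum>x\<in>D. (h T x - h' T x)\<^sup>2) - (\<Sum>x\<in>D. (h S x - h' S x)\<^sup>2)
    \<le> - (2 * aV) * integral {S..T} (\<lambda>t. \<Sum>e\<in>Dstar D.
          (grad (\<lambda>x. ext D (h t) \<psi> x - ext D (h' t) \<psi>' x) e)\<^sup>2)
      + 2 * AV * integral {S..T} (\<lambda>t. \<Sum>e\<in>bdry_edges D. \<bar>\<psi> (bdry_pt D e) - \<psi>' (bdry_pt D e)\<bar>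
          * \<bar>grad (\<lambda>x. ext D (h t) \<psi> x - ext D (h' t) \<psi>' x) e\<bar>)"
    using langevin_difference_energy_inequality[OF assms(1-7,9)] by simp
qed (simp_all add: sum_nonneg)

theorem lemma3p3:
  fixes V V' V'' :: "real \<Rightarrow> real" and aV AV :: real
  assumes "\<And>x. (V has_real_derivative V' x) (at x)"
    and "\<And>x. (V' has_real_derivative V'' x) (at x)"
    and "\<And>x. V (- x) = V x"
    and "0 < aV" and "\<And>x. aV \<le> V'' x" and "\<And>x. V'' x \<le> AV"
    and "\<exists>L. \<forall>x y. \<bar>V'' x - V'' y\<bar> \<le> L * \<bar>x - y\<bar>"
  shows "\<exists>C>0. \<forall>(D :: (int \<times> int) set) \<psi> \<psi>' a b W h h' la lb la' lb' S T.
     finite D \<and> (\<forall>x\<in>D. a x \<le> b x) \<and> (\<forall>x\<in>D. continuous_on UNIV (\<lambda>t. W t x)) \<and>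
     langevin_sol V' D \<psi> a b W h la lb \<and> langevin_sol V' D \<psi>' a b W h' la' lb' \<and> S < T
     \<longrightarrow>
     (\<Sum>x\<in>D. (h T x - h' T x)\<^sup>2)
       + integral {S..T} (\<lambda>t. \<Sum>e\<in>Dstar D.
            (grad (\<lambda>x. ext D (h t) \<psi> x - ext D (h' t) \<psi>' x) e)\<^sup>2)
     \<le> C * ((\<Sum>x\<in>D. (h S x - h' S x)\<^sup>2)
       + integral {S..T} (\<lambda>t. \<Sum>e\<in>bdry_edges D.
            \<bar>\<psi> (bdry_pt D e) - \<psi>' (bdry_pt D e)\<bar>
            * \<bar>grad (\<lambda>x. ext D (h t) \<psi> x - ext D (h' t) \<psi>' x) e\<bar>))"
proof -
  have odd: "\<And>z. V' (- z) = - V' z"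
    using DERIV_even_imp_odd assms(1,3) by blast
  have monotone: "\<And>p q. aV * (p - q)\<^sup>2 \<le> (V' p - V' q) * (p - q)"
    by (rule strongly_monotone_of_deriv_lower_bound[OF assms(2,5)])
  have lipschitz: "\<And>p q. \<bar>V' p - V' q\<bar> \<le> AV * \<bar>p - q\<bar>"
    using lipschitz_of_deriv_bounds[OF assms(2,5,6)] assms(4) by force
  have "continuous_on UNIV V'"
    using assms(2) by (intro continuous_at_imp_continuous_on) (auto intro: DERIV_isCont)
  show ?thesis
  proof (intro exI[of _ "max 1 (2 * AV) / min 1 (2 * aV)"] conjI allI impI)
    show "0 < max 1 (2 * AV) / min 1 (2 * aV)"
      using assms(4) by simp
  qed (elim conjE, rule langevin_difference_energy_estimate[OF _ _ _ odd monotone lipschitz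
        \<open>continuous_on UNIV V'\<close> assms(4)], simp_all)
qed

end
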